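(* Let $\varepsilon>0$, $\kappa\ge\frac14$, $\Delta t>0$, $C_4=\frac{1}{1-e^{-2}}$, $\gamma^{(0)}=3C_4(1+\kappa)$, $\gamma_1^{(0)}=\frac32C_4(1+\kappa)$, $\gamma_3^{(0)}=\frac12C_4(1+\kappa)$, $\alpha_0=\ln\Big(\frac{\gamma^{(0)}+\frac12\kappa}{\gamma^{(0)}-\frac12\kappa}\Big)$, and suppose $A\ge(\gamma^{(0)}-\frac{\kappa}{4})^4\alpha_0^{-2}\varepsilon^{-2}$. Let $u^{-2},u^{-1},u^0$ be real periodic grid functions with equal means, and let $u^{n+1}$, $n\ge0$, be defined by the scheme $$u^{n+1}=e^{-\Delta tL_N}u^n-A\Delta t^3\phi_0(L_N)\Delta_N^2(u^{n+1}-u^n)-\Delta t\,\phi_0(L_N)f_N(u^n)-\Delta t\,\phi_1(L_N)\Big(\tfrac32f_N(u^n)-2f_N(u^{n-1})+\tfrac12f_N(u^{n-2})\Big)-\Delta t\,\phi_2(L_N)\Big(\tfrac12f_N(u^n)-f_N(u^{n-1})+\tfrac12f_N(u^{n-2})\Big).$$ Define the modified energy $$\tilde E_N(u^{n+1},u^n,u^{n-1})=E_N(u^{n+1})+\gamma_1^{(0)}\|\nabla_N(u^{n+1}-u^n)\|_2^2+\gamma_3^{(0)}\|\nabla_N(u^n-u^{n-1})\|_2^2.$$ Then for every $n\ge0$, $$\tilde E_N(u^{n+1},u^n,u^{n-1})\le \tilde E_N(u^n,u^{n-1},u^{n-2}).$$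
   Context: Setting: $\Omega=(0,1)^2$, $N=2K+1$, $h=1/N$, grid $x_i=ih$, $y_j=jh$; periodic grid functions have discrete Fourier expansions $f_{i,j}=\sum_{k,\ell=-K}^{K}\hat f_{k,\ell}\exp(2\pi\mathrm{i}(kx_i+\ell y_j))$. Spectral operators act as Fourier multipliers: $\mathcal D_{Nx}$, $\mathcal D_{Ny}$ by $2\pi\mathrm{i}k$, $2\pi\mathrm{i}\ell$; $\nabla_N f=(\mathcal D_{Nx}f,\mathcal D_{Ny}f)$, $\nabla_N\cdot(f_1,f_2)=\mathcal D_{Nx}f_1+\mathcal D_{Ny}f_2$, $\Delta_N$ has multiplier $-\lambda_{k,\ell}$, $\lambda_{k,\ell}=(2k\pi)^2+(2\ell\pi)^2$. Inner product $\langle f,g\rangle=h^2\sum_{i,j}f_{i,j}g_{i,j}$, $\|f\|_2=\langle f,f\rangle^{1/2}$. $L_N=\varepsilon^2\Delta_N^2-\kappa\Delta_N$ with multiplier $\Lambda_{k,\ell}=\varepsilon^2\lambda_{k,\ell}^2+\kappa\lambda_{k,\ell}$; $e^{-\Delta tL_N}$ has multiplier $e^{-\Delta t\Lambda_{k,\ell}}$. With $g_0(x)=\frac{1-e^{-x}}{x}$, $g_1(x)=\frac{1-g_0(x)}{x}$, $g_2(x)=\frac{1-2g_1(x)}{x}$: $\phi_0(L_N)=(\Delta tL_N)^{-1}(I-e^{-\Delta tL_N})$, $\phi_1(L_N)=(\Delta tL_N)^{-1}(I-(\Delta tL_N)^{-1}(I-e^{-\Delta tL_N}))$, $\phi_2(L_N)=(\Delta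 tL_N)^{-1}(I-2(\Delta tL_N)^{-1}(I-(\Delta tL_N)^{-1}(I-e^{-\Delta tL_N})))$, i.e. the multipliers $g_j(\Delta t\Lambda_{k,\ell})$, $j=0,1,2$, on nonzero modes (they are applied only to zero-mean grid functions). Nonlinearity (pointwise): $f_N(u)=\nabla_N\cdot\Big(\frac{\nabla_N u}{1+|\nabla_N u|^2}\Big)+\kappa\Delta_N u$. Discrete energy: $E_N(\phi)=h^2\sum_{i,j}\big(-\frac12\ln(1+|\nabla_N\phi|^2)_{i,j}\big)+\frac{\varepsilon^2}{2}\|\Delta_N\phi\|_2^2$. *)

theory Defs
  imports Complex_Main
begin

text \<open>Grid functions on the periodic N x N grid, N = 2K+1. A grid function is
  represented as nat => nat => real; only the values at indices i, j < N matter
  (index i corresponds to x_i = i h, h = 1/N).\<close>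

type_synonym grid = "nat \<Rightarrow> nat \<Rightarrow> real"

definition NN :: "nat \<Rightarrow> nat" where "NN K = 2 * K + 1"

definition hh :: "nat \<Rightarrow> real" where "hh K = 1 / real (NN K)"

definition fcoef :: "nat \<Rightarrow> grid \<Rightarrow> int \<Rightarrow> int \<Rightarrow> complex" where
  "fcoef K f k l = (1 / of_nat (NN K ^ 2)) *
     (\<Sum>i<NN K. \<Sum>j<NN K. complex_of_real (f i j) *
        cis (- 2 * pi * (of_int k * hh K * of_nat i + of_int l * hh K * of_nat j)))"

text \<open>Fourier multiplier with symbol m(k,l) (real part of the synthesis; for the
  symbols used here the synthesis of a real grid function is real).\<close>
definition fmult :: "nat \<Rightarrow> (int \<Rightarrow> int \<Rightarrow> complex) \<Rightarrow> grid \<Rightarrow> grid" where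
  "fmult K m f = (\<lambda>i j. Re (\<Sum>k\<in>{- int K..int K}. \<Sum>l\<in>{- int K..int K}.
      m k l * fcoef K f k l *
      cis (2 * pi * (of_int k * hh K * of_nat i + of_int l * hh K * of_nat j))))"

definition DNx :: "nat \<Rightarrow> grid \<Rightarrow> grid" where
  "DNx K = fmult K (\<lambda>k l. 2 * pi * \<i> * of_int k)"

definition DNy :: "nat \<Rightarrow> grid \<Rightarrow> grid" where
  "DNy K = fmult K (\<lambda>k l. 2 * pi * \<i> * of_int l)"

definition divN :: "nat \<Rightarrow> grid \<Rightarrow> grid \<Rightarrow> grid" where
  "divN K f1 f2 = (\<lambda>i j. DNx K f1 i j + DNy K f2 i j)"

definition lam :: "int \<Rightarrow> int \<Rightarrow> real" where
  "lam k l = (2 * of_int k * pi)\<^sup>2 + (2 * of_int l * pi)\<^sup>2"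

definition LapN :: "nat \<Rightarrow> grid \<Rightarrow> grid" where
  "LapN K = fmult K (\<lambda>k l. complex_of_real (- lam k l))"

text \<open>symbol of L_N = eps^2 Delta_N^2 - kappa Delta_N\<close>
definition LamL :: "real \<Rightarrow> real \<Rightarrow> int \<Rightarrow> int \<Rightarrow> real" where
  "LamL eps kap k l = eps\<^sup>2 * (lam k l)\<^sup>2 + kap * lam k l"

definition expL :: "nat \<Rightarrow> real \<Rightarrow> real \<Rightarrow> real \<Rightarrow> grid \<Rightarrow> grid" where
  "expL K eps kap dt = fmult K (\<lambda>k l. complex_of_real (exp (- dt * LamL eps kap k l)))"

text \<open>g_0, g_1, g_2 (continuously extended at x = 0; on zero-mean inputs the
  value at the zero mode is irrelevant).\<close>
definition g0 :: "real \<Rightarrow> real" where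
  "g0 x = (if x = 0 then 1 else (1 - exp (- x)) / x)"
definition g1 :: "real \<Rightarrow> real" where
  "g1 x = (if x = 0 then 1/2 else (1 - g0 x) / x)"
definition g2 :: "real \<Rightarrow> real" where
  "g2 x = (if x = 0 then 1/3 else (1 - 2 * g1 x) / x)"

definition phiL :: "(real \<Rightarrow> real) \<Rightarrow> nat \<Rightarrow> real \<Rightarrow> real \<Rightarrow> real \<Rightarrow> grid \<Rightarrow> grid" where
  "phiL g K eps kap dt = fmult K (\<lambda>k l. complex_of_real (g (dt * LamL eps kap k l)))"

definition fN :: "nat \<Rightarrow> real \<Rightarrow> grid \<Rightarrow> grid" where
  "fN K kap u = (\<lambda>i j.
     divN K (\<lambda>a b. DNx K u a b / (1 + (DNx K u a b)\<^sup>2 + (DNy K u a b)\<^sup>2))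
            (\<lambda>a b. DNy K u a b / (1 + (DNx K u a b)\<^sup>2 + (DNy K u a b)\<^sup>2)) i j
     + kap * LapN K u i j)"

definition ipN :: "nat \<Rightarrow> grid \<Rightarrow> grid \<Rightarrow> real" where
  "ipN K f g = (hh K)\<^sup>2 * (\<Sum>i<NN K. \<Sum>j<NN K. f i j * g i j)"

definition norm2N :: "nat \<Rightarrow> grid \<Rightarrow> real" where
  "norm2N K f = sqrt (ipN K f f)"

definition gradnorm2N :: "nat \<Rightarrow> grid \<Rightarrow> real" where
  "gradnorm2N K f = sqrt (ipN K (DNx K f) (DNx K f) + ipN K (DNy K f) (DNy K f))"

definition EN :: "nat \<Rightarrow> real \<Rightarrow> grid \<Rightarrow> real" where
  "EN K eps p = (hh K)\<^sup>2 * (\<Sum>i<NN K. \<Sum>j<NN K.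
        - 1/2 * ln (1 + (DNx K p i j)\<^sup>2 + (DNy K p i j)\<^sup>2))
     + eps\<^sup>2 / 2 * (norm2N K (LapN K p))\<^sup>2"

definition gsub :: "grid \<Rightarrow> grid \<Rightarrow> grid" where
  "gsub f g = (\<lambda>i j. f i j - g i j)"

definition Etil :: "nat \<Rightarrow> real \<Rightarrow> real \<Rightarrow> real \<Rightarrow> grid \<Rightarrow> grid \<Rightarrow> grid \<Rightarrow> real" where
  "Etil K eps gam1 gam3 a b c = EN K eps a
     + gam1 * (gradnorm2N K (gsub a b))\<^sup>2 + gam3 * (gradnorm2N K (gsub b c))\<^sup>2"

definition gmean :: "nat \<Rightarrow> grid \<Rightarrow> real" where
  "gmean K f = (\<Sum>i<NN K. \<Sum>j<NN K. f i j) / real (NN K ^ 2)"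

definition scheme_step :: "nat \<Rightarrow> real \<Rightarrow> real \<Rightarrow> real \<Rightarrow> real \<Rightarrow> grid \<Rightarrow> grid \<Rightarrow> grid \<Rightarrow> grid \<Rightarrow> bool" where
  "scheme_step K eps kap dt A unew u um1 um2 \<longleftrightarrow>
    (\<forall>i<NN K. \<forall>j<NN K.
      unew i j =
        expL K eps kap dt u i j
        - A * dt ^ 3 * phiL g0 K eps kap dt (LapN K (LapN K (gsub unew u))) i j
        - dt * phiL g0 K eps kap dt (fN K kap u) i j
        - dt * phiL g1 K eps kap dt
            (\<lambda>a b. 3/2 * fN K kap u a b - 2 * fN K kap um1 a b + 1/2 * fN K kap um2 a b) i j
        - dt * phiL g2 K eps kap dt
            (\<lambda>a b. 1/2 * fN K kap u a b - fN K kap um1 a b + 1/2 * fN K kap um2 a b) i j)"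

end

theory Submission
  imports Defs
begin

text \<open>Every operator of the scheme is a Fourier multiplier, so on each nonzero mode the scheme is
  a scalar identity that expresses the coefficient of the nonlinear flux divergence at \<open>u\<^sup>n\<close>
  through the increment \<open>u\<^sup>n\<^sup>+\<^sup>1 - u\<^sup>n\<close>, through \<open>u\<^sup>n\<close>, and through the two backward
  differences of \<open>f\<^sub>N\<close>, weighted by \<open>(3 g\<^sub>1 + g\<^sub>2) / (2 g\<^sub>0) \<in> [0, 2]\<close> and
  \<open>(g\<^sub>1 + g\<^sub>2) / (2 g\<^sub>0) \<in> [0, 1]\<close>. Testing this identity with the increment and summing
  over the modes (Parseval) bounds the energy increment, since \<open>-ln (1 + |p|\<^sup>2) / 2\<close> has
  Hessian at most the identity. The bound \<open>1 / (\<Delta>t g\<^sub>0(\<Delta>t \<Lambda>)) \<ge> max \<Lambda> (1/\<Delta>t + \<Lambda>/2)\<close>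
  together with the stabilisation term \<open>A \<Delta>t\<^sup>2 \<lambda>\<^sup>2\<close> and the size of \<open>A\<close> yields a
  dissipation of \<open>gam0\<close> times the squared gradient norm of the increment. The full flux \<open>p / (1 + |p|\<^sup>2) + \<kappa> p\<close> is
  \<open>(1 + \<kappa>)\<close>-Lipschitz, so Young's inequality absorbs the extrapolation terms into this
  dissipation and the gradient differences carried by the modified energy.\<close>

section \<open>Discrete Fourier analysis on the periodic grid\<close>

definition modes :: "nat \<Rightarrow> int set" where
  "modes K = {- int K..int K}"

definition wave :: "nat \<Rightarrow> int \<Rightarrow> int \<Rightarrow> complex" where
  "wave K k i = cis (2 * pi * of_int k * of_int i / of_nat (NN K))"

lemma NN_pos: "0 < NN K"
  by (simp add: NN_def)

lemma finite_modes [simp]: "finite (modes K)"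
  by (simp add: modes_def)

lemma wave_commute: "wave K k i = wave K i k"
  by (simp add: wave_def algebra_simps)

lemma wave_uminus: "wave K (- k) i = cnj (wave K k i)"
  by (simp add: wave_def cis_cnj)

lemma wave_mult_cnj: "wave K k i * cnj (wave K k' i) = wave K (k - k') i"
  by (simp add: wave_def cis_cnj cis_mult algebra_simps diff_divide_distrib)

lemma wave_mult_cnj': "wave K k i * cnj (wave K k i') = wave K k (i - i')"
  using wave_mult_cnj[of K i k i'] by (simp add: wave_commute)

lemma NN_dvd_iff_zero:
  fixes d :: int
  assumes "\<bar>d\<bar> < int (NN K)"
  shows "int (NN K) dvd d \<longleftrightarrow> d = 0"
proof
  assume "int (NN K) dvd d"
  then obtain q where "d = int (NN K) * q"
    by (auto elim: dvdE)
  with assms show "d = 0"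
    by (metis abs_mult abs_of_nat dvd_imp_le_int dvd_triv_left less_le_not_le mult.commute)
qed simp

lemma sum_wave:
  "(\<Sum>i<NN K. wave K m (int i)) = (if int (NN K) dvd m then of_nat (NN K) else 0)"
proof -
  define N where "N = NN K"
  have N: "N > 0"
    using NN_pos N_def by simp
  define z where "z = cis (2 * pi * of_int m / of_nat N)"
  have sum_eq: "(\<Sum>i<NN K. wave K m (int i)) = (\<Sum>i<N. z ^ i)"
    by (simp add: wave_def z_def N_def DeMoivre algebra_simps)
  have "z = 1 \<longleftrightarrow> int N dvd m"
  proof
    assume "z = 1"
    then have "cos (2 * pi * of_int m / of_nat N) = 1"
      by (metis cis.sel(1) one_complex.simps(1) z_def)
    then obtain x where "2 * pi * of_int m / of_nat N = real_of_int x * 2 * pi"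
      using cos_one_2pi_int by blast
    then have "real_of_int m = real_of_int (x * int N)"
      using N by (simp add: field_simps)
    then show "int N dvd m"
      by (metis dvd_triv_right mult.commute of_int_eq_iff)
  next
    assume "int N dvd m"
    then obtain q where "m = int N * q"
      by (auto elim: dvdE)
    then have "2 * pi * of_int m / of_nat N = 2 * pi * real_of_int q"
      using N by simp
    then show "z = 1"
      unfolding z_def by (metis cis_multiple_2pi Ints_of_int)
  qed
  moreover have "z ^ N = 1"
    using N by (simp add: z_def DeMoivre cis_multiple_2pi)
  ultimately show ?thesis
    by (cases "z = 1") (simp_all add: sum_eq geometric_sum N_def)
qed

lemma wave_orthogonal_modes:
  assumes "k \<in> modes K" "k' \<in> modes K"
  shows "(\<Sum>i<NN K. wave K k (int i) * cnj (wave K k' (int i))) =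
    (if k = k' then of_nat (NN K) else 0)"
proof -
  have "\<bar>k - k'\<bar> < int (NN K)"
    using assms by (auto simp: modes_def NN_def)
  then show ?thesis
    by (simp add: wave_mult_cnj sum_wave NN_dvd_iff_zero)
qed

lemma sum_modes_shift: "(\<Sum>k\<in>modes K. g k) = (\<Sum>k0<NN K. g (int k0 - int K))"
proof -
  have "modes K = (\<lambda>k0. int k0 - int K) ` {..<NN K}"
  proof (intro equalityI subsetI)
    fix x assume "x \<in> modes K"
    then show "x \<in> (\<lambda>k0. int k0 - int K) ` {..<NN K}"
      by (intro image_eqI[of _ _ "nat (x + int K)"]) (auto simp: modes_def NN_def)
  qed (auto simp: modes_def NN_def)
  moreover have "inj_on (\<lambda>k0. int k0 - int K) {..<NN K}"
    by (auto simp: inj_on_def)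
  ultimately show ?thesis
    by (simp add: sum.reindex)
qed

lemma sum_modes_uminus: "(\<Sum>k\<in>modes K. g (- k)) = (\<Sum>k\<in>modes K. g k)"
proof -
  have "uminus ` modes K = modes K"
    unfolding modes_def by (auto simp: image_iff)
  then show ?thesis
    using sum.reindex[of uminus "modes K" g] by (simp add: comp_def)
qed

lemma wave_orthogonal_points:
  assumes "i < NN K" "i' < NN K"
  shows "(\<Sum>k\<in>modes K. wave K k (int i) * cnj (wave K k (int i'))) =
    (if i = i' then of_nat (NN K) else 0)"
proof -
  define d where "d = int i - int i'"
  have d: "\<bar>d\<bar> < int (NN K)"
    using assms by (auto simp: d_def)
  have "(\<Sum>k\<in>modes K. wave K k (int i) * cnj (wave K k (int i'))) =
      (\<Sum>k0<NN K. wave K d (int k0 - int K))"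
    by (simp add: wave_mult_cnj' wave_commute d_def sum_modes_shift)
  also have "\<dots> = (\<Sum>k0<NN K. cnj (wave K d (int K)) * wave K d (int k0))"
    by (rule sum.cong) (simp_all add: wave_def cis_cnj cis_mult algebra_simps diff_divide_distrib)
  also have "\<dots> = cnj (wave K d (int K)) * (if int (NN K) dvd d then of_nat (NN K) else 0)"
    by (simp add: sum_distrib_left[symmetric] sum_wave)
  also have "\<dots> = (if i = i' then of_nat (NN K) else 0)"
    using d by (simp add: NN_dvd_iff_zero d_def wave_def)
  finally show ?thesis .
qed

lemma sum_swap_double:
  "(\<Sum>i\<in>A. \<Sum>j\<in>B. \<Sum>k\<in>C. \<Sum>l\<in>D. f i j k l) =
   (\<Sum>k\<in>C. \<Sum>l\<in>D. \<Sum>i\<in>A. \<Sum>j\<in>B. (f i j k l :: 'a::comm_monoid_add))"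
proof -
  have "(\<Sum>i\<in>A. \<Sum>j\<in>B. \<Sum>k\<in>C. \<Sum>l\<in>D. f i j k l) = (\<Sum>i\<in>A. \<Sum>k\<in>C. \<Sum>l\<in>D. \<Sum>j\<in>B. f i j k l)"
    by (simp add: sum.swap[of _ B])
  also have "\<dots> = (\<Sum>k\<in>C. \<Sum>l\<in>D. \<Sum>i\<in>A. \<Sum>j\<in>B. f i j k l)"
    by (simp add: sum.swap[of _ A])
  finally show ?thesis .
qed

definition synth :: "nat \<Rightarrow> (int \<Rightarrow> int \<Rightarrow> complex) \<Rightarrow> nat \<Rightarrow> nat \<Rightarrow> complex" where
  "synth K a i j = (\<Sum>k\<in>modes K. \<Sum>l\<in>modes K. a k l * (wave K k (int i) * wave K l (int j)))"

lemma fcoef_eq_waves: "fcoef K f k l = (1 / of_nat (NN K) ^ 2) *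
   (\<Sum>i<NN K. \<Sum>j<NN K. of_real (f i j) * cnj (wave K k (int i) * wave K l (int j)))"
  unfolding fcoef_def
  by (simp add: wave_def cis_cnj cis_mult hh_def add_divide_distrib algebra_simps)

lemma fmult_eq_Re_synth: "fmult K m f i j = Re (synth K (\<lambda>k l. m k l * fcoef K f k l) i j)"
  unfolding fmult_def synth_def modes_def
  by (simp add: wave_def cis_mult hh_def add_divide_distrib algebra_simps)

lemma delta_double_sum:
  assumes "k' \<in> A" "l' \<in> B" "finite A" "finite B"
  shows "(\<Sum>k\<in>A. \<Sum>l\<in>B. a k l * ((if k = k' then c else 0) * (if l = l' then c else 0))) =
    c ^ 2 * (a k' l' :: complex)"
proof -
  have "(\<Sum>k\<in>A. \<Sum>l\<in>B. a k l * ((if k = k' then c else 0) * (if l = l' then c else 0))) =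
    (\<Sum>k\<in>A. if k = k' then (\<Sum>l\<in>B. if l = l' then c * c * a k l else 0) else 0)"
    by (auto simp: algebra_simps intro!: sum.cong)
  then show ?thesis
    using assms by (simp add: power2_eq_square)
qed

lemma analysis_synth:
  assumes "k' \<in> modes K" "l' \<in> modes K"
  shows "(\<Sum>i<NN K. \<Sum>j<NN K. synth K a i j * cnj (wave K k' (int i) * wave K l' (int j))) =
    of_nat (NN K) ^ 2 * a k' l'"
proof -
  have "(\<Sum>i<NN K. \<Sum>j<NN K. synth K a i j * cnj (wave K k' (int i) * wave K l' (int j))) =
    (\<Sum>k\<in>modes K. \<Sum>l\<in>modes K. \<Sum>i<NN K. \<Sum>j<NN K. a k l *
      ((wave K k (int i) * cnj (wave K k' (int i))) * (wave K l (int j) * cnj (wave K l' (int j)))))"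
    unfolding synth_def sum_distrib_right
    by (subst sum_swap_double) (intro sum.cong refl; simp add: mult_ac)
  also have "\<dots> = (\<Sum>k\<in>modes K. \<Sum>l\<in>modes K. a k l *
      ((\<Sum>i<NN K. wave K k (int i) * cnj (wave K k' (int i))) *
       (\<Sum>j<NN K. wave K l (int j) * cnj (wave K l' (int j)))))"
    by (simp only: sum_product, simp only: sum_distrib_left)
  also have "\<dots> = of_nat (NN K) ^ 2 * a k' l'"
    using assms by (simp add: wave_orthogonal_modes delta_double_sum cong: sum.cong)
  finally show ?thesis .
qed

lemma synth_fcoef:
  assumes "i < NN K" "j < NN K"
  shows "synth K (fcoef K f) i j = of_real (f i j)"
proof -
  have "synth K (fcoef K f) i j = (1 / of_nat (NN K) ^ 2) *
     (\<Sum>i'<NN K. \<Sum>j'<NN K. \<Sum>k\<in>modes K. \<Sum>l\<in>modes K. of_real (f i' j') *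
        ((wave K k (int i) * cnj (wave K k (int i'))) * (wave K l (int j) * cnj (wave K l (int j')))))"
    unfolding synth_def fcoef_eq_waves sum_distrib_left sum_distrib_right
    by (subst sum_swap_double) (intro sum.cong refl; simp add: mult_ac)
  also have "\<dots> = (1 / of_nat (NN K) ^ 2) *
     (\<Sum>i'<NN K. \<Sum>j'<NN K. of_real (f i' j') *
        ((\<Sum>k\<in>modes K. wave K k (int i) * cnj (wave K k (int i'))) *
         (\<Sum>l\<in>modes K. wave K l (int j) * cnj (wave K l (int j')))))"
    by (simp only: sum_product, simp only: sum_distrib_left)
  also have "\<dots> = (1 / of_nat (NN K) ^ 2) *
     (\<Sum>i'<NN K. \<Sum>j'<NN K. of_real (f i' j') *
        ((if i' = i then of_nat (NN K) else 0) * (if j' = j then of_nat (NN K) else 0)))"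
    by (intro arg_cong2[where f="(*)"] sum.cong refl) (auto simp: wave_orthogonal_points assms)
  also have "\<dots> = of_real (f i j)"
    using assms NN_pos by (simp add: delta_double_sum)
  finally show ?thesis .
qed

definition hermitian :: "(int \<Rightarrow> int \<Rightarrow> complex) \<Rightarrow> bool" where
  "hermitian m \<longleftrightarrow> (\<forall>k l. m (- k) (- l) = cnj (m k l))"

lemma fcoef_uminus: "fcoef K f (- k) (- l) = cnj (fcoef K f k l)"
  unfolding fcoef_eq_waves by (simp add: wave_uminus)

text \<open>\<^const>\<open>fmult\<close> keeps only the real part of the synthesis; for Hermitian symbols the
  imaginary part vanishes, so \<^const>\<open>fmult\<close> really multiplies the Fourier coefficients.\<close>

lemma synth_real:
  assumes "hermitian a"
  shows "of_real (Re (synth K a i j)) = synth K a i j"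
proof -
  have "cnj (synth K a i j) =
      (\<Sum>k\<in>modes K. \<Sum>l\<in>modes K. a (- k) (- l) * (wave K (- k) (int i) * wave K (- l) (int j)))"
    using assms unfolding synth_def hermitian_def by (simp add: wave_uminus)
  also have "\<dots> = synth K a i j"
    unfolding synth_def
    by (subst sum_modes_uminus[where g = "\<lambda>k. \<Sum>l\<in>modes K. a k (- l) * (wave K k (int i) * wave K (- l) (int j))"])
      (simp add: sum_modes_uminus[where g = "\<lambda>l. a _ l * (wave K _ (int i) * wave K l (int j))"])
  finally show ?thesis
    by (metis Reals_cnj_iff complex_is_Real_iff of_real_Re)
qed

lemma fcoef_eqI:
  assumes "k \<in> modes K" "l \<in> modes K"
    and "\<And>i j. i < NN K \<Longrightarrow> j < NN K \<Longrightarrow> of_real (g i j) = synth K a i j"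
  shows "fcoef K g k l = a k l"
  using analysis_synth[OF assms(1,2), of a] NN_pos[of K]
  by (simp add: fcoef_eq_waves assms(3) field_simps)

lemma fcoef_fmult:
  assumes "hermitian m" "k \<in> modes K" "l \<in> modes K"
  shows "fcoef K (fmult K m f) k l = m k l * fcoef K f k l"
proof (rule fcoef_eqI[OF assms(2,3)])
  have "hermitian (\<lambda>k l. m k l * fcoef K f k l)"
    using assms(1) by (simp add: hermitian_def fcoef_uminus)
  then show "of_real (fmult K m f i j) = synth K (\<lambda>k l. m k l * fcoef K f k l) i j" for i j
    unfolding fmult_eq_Re_synth by (rule synth_real)
qed

lemma hermitian_real: "(\<And>k l. r (- k) (- l) = r k l) \<Longrightarrow> hermitian (\<lambda>k l. complex_of_real (r k l))"
  by (simp add: hermitian_def)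

lemma of_real_ipN_parseval:
  "of_real (ipN K f g) = (\<Sum>k\<in>modes K. \<Sum>l\<in>modes K. fcoef K f k l * cnj (fcoef K g k l))"
proof -
  have "of_real (ipN K f g) =
      (1 / of_nat (NN K) ^ 2) * (\<Sum>i<NN K. \<Sum>j<NN K. synth K (fcoef K f) i j * of_real (g i j))"
    unfolding ipN_def hh_def by (simp add: synth_fcoef power_divide)
  also have "\<dots> = (1 / of_nat (NN K) ^ 2) * (\<Sum>k\<in>modes K. \<Sum>l\<in>modes K. \<Sum>i<NN K. \<Sum>j<NN K.
       fcoef K f k l * (of_real (g i j) * (wave K k (int i) * wave K l (int j))))"
    unfolding synth_def sum_distrib_right
    by (subst sum_swap_double) (simp add: mult_ac)
  also have "\<dots> = (\<Sum>k\<in>modes K. \<Sum>l\<in>modes K. fcoef K f k l * ((1 / of_nat (NN K) ^ 2) *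
       (\<Sum>i<NN K. \<Sum>j<NN K. of_real (g i j) * (wave K k (int i) * wave K l (int j)))))"
    by (simp add: sum_distrib_left algebra_simps)
  also have "\<dots> = (\<Sum>k\<in>modes K. \<Sum>l\<in>modes K. fcoef K f k l * cnj (fcoef K g k l))"
    unfolding fcoef_eq_waves by simp
  finally show ?thesis .
qed

lemma ipN_parseval:
  "ipN K f g = Re (\<Sum>k\<in>modes K. \<Sum>l\<in>modes K. fcoef K f k l * cnj (fcoef K g k l))"
  by (metis Re_complex_of_real of_real_ipN_parseval)

lemma ipN_self_parseval: "ipN K f f = (\<Sum>k\<in>modes K. \<Sum>l\<in>modes K. (cmod (fcoef K f k l))\<^sup>2)"
  by (simp add: ipN_parseval complex_mult_cnj Re_sum cmod_power2)

lemma ipN_self_nonneg: "ipN K f f \<ge> 0"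
  unfolding ipN_def by (simp add: sum_nonneg)

lemma fcoef_linear:
  "fcoef K (\<lambda>i j. a * f i j + b * g i j) k l = of_real a * fcoef K f k l + of_real b * fcoef K g k l"
  unfolding fcoef_eq_waves by (simp add: sum.distrib sum_distrib_left algebra_simps)

lemma fcoef_add: "fcoef K (\<lambda>i j. f i j + g i j) k l = fcoef K f k l + fcoef K g k l"
  using fcoef_linear[of K 1 f 1 g k l] by simp

lemma fcoef_diff: "fcoef K (\<lambda>i j. f i j - g i j) k l = fcoef K f k l - fcoef K g k l"
  using fcoef_linear[of K 1 f "-1" g k l] by simp

lemma fcoef_scale: "fcoef K (\<lambda>i j. a * f i j) k l = of_real a * fcoef K f k l"
  using fcoef_linear[of K a f 0 f k l] by simp

lemma fcoef_gsub: "fcoef K (gsub f g) k l = fcoef K f k l - fcoef K g k l"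
  unfolding gsub_def by (rule fcoef_diff)

lemma fcoef_cong:
  "(\<And>i j. i < NN K \<Longrightarrow> j < NN K \<Longrightarrow> f i j = g i j) \<Longrightarrow> fcoef K f k l = fcoef K g k l"
  unfolding fcoef_eq_waves by simp

lemma fmult_gsub: "fmult K m (gsub f g) i j = fmult K m f i j - fmult K m g i j"
  unfolding fmult_def fcoef_gsub[abs_def]
  by (simp only: right_diff_distrib left_diff_distrib sum_subtractf minus_complex.sel)

section \<open>Fourier symbols of the operators of the scheme\<close>

abbreviation dsym :: "int \<Rightarrow> complex" where
  "dsym k \<equiv> complex_of_real (2 * pi) * \<i> * of_int k"

lemma LamL_uminus: "LamL eps kap (- k) (- l) = LamL eps kap k l"
  by (simp add: LamL_def lam_def)

lemma lam_nonneg: "lam k l \<ge> 0"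
  by (simp add: lam_def)

lemma lam_eq_0_iff: "lam k l = 0 \<longleftrightarrow> k = 0 \<and> l = 0"
  by (simp add: lam_def)

lemma lam_eq_dsym: "complex_of_real (lam k l) = - ((dsym k)\<^sup>2 + (dsym l)\<^sup>2)"
  by (simp add: lam_def power_mult_distrib algebra_simps)

lemma fcoef_DNx: "k \<in> modes K \<Longrightarrow> l \<in> modes K \<Longrightarrow> fcoef K (DNx K f) k l = dsym k * fcoef K f k l"
  unfolding DNx_def by (rule fcoef_fmult) (simp_all add: hermitian_def)

lemma fcoef_DNy: "k \<in> modes K \<Longrightarrow> l \<in> modes K \<Longrightarrow> fcoef K (DNy K f) k l = dsym l * fcoef K f k l"
  unfolding DNy_def by (rule fcoef_fmult) (simp_all add: hermitian_def)

lemma fcoef_LapN: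
  "k \<in> modes K \<Longrightarrow> l \<in> modes K \<Longrightarrow> fcoef K (LapN K f) k l = - of_real (lam k l) * fcoef K f k l"
  unfolding LapN_def by (subst fcoef_fmult) (simp_all add: hermitian_def lam_def)

lemma fcoef_expL: "k \<in> modes K \<Longrightarrow> l \<in> modes K \<Longrightarrow>
  fcoef K (expL K eps kap dt f) k l = of_real (exp (- dt * LamL eps kap k l)) * fcoef K f k l"
  unfolding expL_def by (simp add: fcoef_fmult hermitian_real LamL_uminus)

lemma hermitian_phi: "hermitian (\<lambda>k l. complex_of_real (g (dt * LamL eps kap k l)))"
  by (simp add: hermitian_real LamL_uminus)

lemma fcoef_phiL: "k \<in> modes K \<Longrightarrow> l \<in> modes K \<Longrightarrow>
  fcoef K (phiL g K eps kap dt f) k l = of_real (g (dt * LamL eps kap k l)) * fcoef K f k l"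
  unfolding phiL_def by (simp add: fcoef_fmult hermitian_phi)

lemma DNx_gsub: "DNx K (gsub f g) i j = DNx K f i j - DNx K g i j"
  unfolding DNx_def by (rule fmult_gsub)

lemma DNy_gsub: "DNy K (gsub f g) i j = DNy K f i j - DNy K g i j"
  unfolding DNy_def by (rule fmult_gsub)

definition nl_flux_x :: "nat \<Rightarrow> grid \<Rightarrow> grid" where
  "nl_flux_x K u = (\<lambda>i j. DNx K u i j / (1 + (DNx K u i j)\<^sup>2 + (DNy K u i j)\<^sup>2))"

definition nl_flux_y :: "nat \<Rightarrow> grid \<Rightarrow> grid" where
  "nl_flux_y K u = (\<lambda>i j. DNy K u i j / (1 + (DNx K u i j)\<^sup>2 + (DNy K u i j)\<^sup>2))"

definition flux_x :: "nat \<Rightarrow> real \<Rightarrow> grid \<Rightarrow> grid" where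
  "flux_x K kap u = (\<lambda>i j. nl_flux_x K u i j + kap * DNx K u i j)"

definition flux_y :: "nat \<Rightarrow> real \<Rightarrow> grid \<Rightarrow> grid" where
  "flux_y K kap u = (\<lambda>i j. nl_flux_y K u i j + kap * DNy K u i j)"

lemma fN_eq_nl_flux:
  "fN K kap u = (\<lambda>i j. DNx K (nl_flux_x K u) i j + DNy K (nl_flux_y K u) i j + kap * LapN K u i j)"
  unfolding fN_def divN_def nl_flux_x_def nl_flux_y_def ..

lemma fcoef_fN_nl_flux:
  assumes "k \<in> modes K" "l \<in> modes K"
  shows "fcoef K (fN K kap u) k l =
    dsym k * fcoef K (nl_flux_x K u) k l + dsym l * fcoef K (nl_flux_y K u) k l
    - of_real (kap * lam k l) * fcoef K u k l"
  unfolding fN_eq_nl_flux fcoef_add fcoef_scale using assms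
  by (simp add: fcoef_DNx fcoef_DNy fcoef_LapN)

lemma fcoef_fN_flux:
  assumes "k \<in> modes K" "l \<in> modes K"
  shows "fcoef K (fN K kap u) k l = dsym k * fcoef K (flux_x K kap u) k l + dsym l * fcoef K (flux_y K kap u) k l"
  unfolding fcoef_fN_nl_flux[OF assms] flux_x_def flux_y_def fcoef_add fcoef_scale
  using assms by (simp add: fcoef_DNx fcoef_DNy lam_eq_dsym algebra_simps power2_eq_square)

lemma fcoef_scheme_step:
  assumes "scheme_step K eps kap dt A unew u um1 um2" "k \<in> modes K" "l \<in> modes K"
  defines "x \<equiv> dt * LamL eps kap k l"
  shows "fcoef K unew k l = of_real (exp (- x)) * fcoef K u k l
     - of_real (A * dt ^ 3 * g0 x * (lam k l)\<^sup>2) * (fcoef K unew k l - fcoef K u k l)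
     - of_real (dt * g0 x) * fcoef K (fN K kap u) k l
     - of_real (dt * g1 x) * (3/2 * fcoef K (fN K kap u) k l - 2 * fcoef K (fN K kap um1) k l
         + 1/2 * fcoef K (fN K kap um2) k l)
     - of_real (dt * g2 x) * (1/2 * fcoef K (fN K kap u) k l - fcoef K (fN K kap um1) k l
         + 1/2 * fcoef K (fN K kap um2) k l)"
proof -
  have "fcoef K unew k l = fcoef K (\<lambda>i j.
        expL K eps kap dt u i j
        - A * dt ^ 3 * phiL g0 K eps kap dt (LapN K (LapN K (gsub unew u))) i j
        - dt * phiL g0 K eps kap dt (fN K kap u) i j
        - dt * phiL g1 K eps kap dt
            (\<lambda>a b. 3/2 * fN K kap u a b - 2 * fN K kap um1 a b + 1/2 * fN K kap um2 a b) i j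
        - dt * phiL g2 K eps kap dt
            (\<lambda>a b. 1/2 * fN K kap u a b - fN K kap um1 a b + 1/2 * fN K kap um2 a b) i j) k l"
    using assms(1) by (intro fcoef_cong) (simp add: scheme_step_def)
  also have "\<dots> = of_real (exp (- x)) * fcoef K u k l
     - of_real (A * dt ^ 3 * g0 x * (lam k l)\<^sup>2) * (fcoef K unew k l - fcoef K u k l)
     - of_real (dt * g0 x) * fcoef K (fN K kap u) k l
     - of_real (dt * g1 x) * (3/2 * fcoef K (fN K kap u) k l - 2 * fcoef K (fN K kap um1) k l
         + 1/2 * fcoef K (fN K kap um2) k l)
     - of_real (dt * g2 x) * (1/2 * fcoef K (fN K kap u) k l - fcoef K (fN K kap um1) k l
         + 1/2 * fcoef K (fN K kap um2) k l)"
    by (simp only: assms(2,3) fcoef_diff fcoef_add fcoef_scale fcoef_expL fcoef_phiL fcoef_LapN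
        fcoef_gsub x_def[symmetric])
      (simp add: algebra_simps power2_eq_square x_def)
  finally show ?thesis .
qed

section \<open>The functions \<open>g\<^sub>0\<close>, \<open>g\<^sub>1\<close>, \<open>g\<^sub>2\<close> and the modal coercivity\<close>

lemma exp_neg_pade_lower:
  fixes x :: real
  assumes "0 \<le> x"
  shows "2 - x \<le> exp (- x) * (2 + x)"
proof -
  have "(\<lambda>t. exp (- t) * (2 + t) + t) 0 \<le> (\<lambda>t. exp (- t) * (2 + t) + t) x"
  proof (rule DERIV_nonneg_imp_nondecreasing[OF assms], intro exI conjI)
    fix t :: real
    show "((\<lambda>t. exp (- t) * (2 + t) + t) has_real_derivative 1 - exp (- t) * (1 + t)) (at t)"
      by (auto intro!: derivative_eq_intros simp: algebra_simps)
    show "0 \<le> 1 - exp (- t) * (1 + t)"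
      using exp_ge_add_one_self[of t] by (simp add: exp_minus field_simps)
  qed
  then show ?thesis
    by simp
qed

lemma exp_neg_quadratic_upper:
  fixes x :: real
  assumes "0 \<le> x"
  shows "2 * exp (- x) \<le> x\<^sup>2 - 2 * x + 2"
proof -
  have "(\<lambda>t. t\<^sup>2 - 2 * t - 2 * exp (- t)) 0 \<le> (\<lambda>t. t\<^sup>2 - 2 * t - 2 * exp (- t)) x"
  proof (rule DERIV_nonneg_imp_nondecreasing[OF assms], intro exI conjI)
    fix t :: real
    show "((\<lambda>t. t\<^sup>2 - 2 * t - 2 * exp (- t)) has_real_derivative 2 * t - 2 + 2 * exp (- t)) (at t)"
      by (auto intro!: derivative_eq_intros simp: algebra_simps)
    show "0 \<le> 2 * t - 2 + 2 * exp (- t)"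
      using exp_ge_add_one_self[of "- t"] by simp
  qed
  then show ?thesis
    by simp
qed

lemma g0_pos: "0 \<le> x \<Longrightarrow> 0 < g0 x"
  by (cases "x = 0") (auto simp: g0_def divide_pos_pos)

lemma mult_g0: "x \<noteq> 0 \<Longrightarrow> x * g0 x = 1 - exp (- x)"
  by (simp add: g0_def)

lemma g_ordered:
  assumes "0 \<le> x"
  shows "0 \<le> g2 x" "g2 x \<le> g1 x" "g1 x \<le> g0 x"
proof -
  have "0 \<le> g2 x \<and> g2 x \<le> g1 x \<and> g1 x \<le> g0 x"
  proof (cases "x = 0")
    case False
    then have x: "x > 0"
      using assms by simp
    define e where "e = exp (- x)"
    have G0: "g0 x = (1 - e) / x"
      using False by (simp add: g0_def e_def)
    have G1: "g1 x = (x - 1 + e) / x\<^sup>2"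
      using False by (simp add: g1_def G0 field_simps power2_eq_square)
    have G2: "g2 x = (x\<^sup>2 - 2 * x + 2 - 2 * e) / x ^ 3"
      using False by (simp add: g2_def G1 field_simps power2_eq_square power3_eq_cube)
    have "e * (1 + x) \<le> 1"
      using exp_ge_add_one_self[of x] by (simp add: e_def exp_minus field_simps)
    moreover have "2 * e \<le> x\<^sup>2 - 2 * x + 2"
      unfolding e_def using exp_neg_quadratic_upper assms by simp
    moreover have "2 - x \<le> e * (2 + x)"
      unfolding e_def using exp_neg_pade_lower assms by simp
    ultimately show ?thesis
      unfolding G0 G1 G2 using x
      by (simp add: divide_simps power2_eq_square power3_eq_cube) (simp add: algebra_simps)
  qed (simp add: g0_def g1_def g2_def)
  then show "0 \<le> g2 x" "g2 x \<le> g1 x" "g1 x \<le> g0 x"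
    by auto
qed

lemma inverse_dt_g0_lower:
  fixes dt L :: real
  assumes "dt > 0" "L > 0"
  shows "L \<le> 1 / (dt * g0 (dt * L))" "1 / dt + L / 2 \<le> 1 / (dt * g0 (dt * L))"
proof -
  define x where "x = dt * L"
  define e where "e = exp (- x)"
  have x: "x > 0"
    using assms by (simp add: x_def)
  then have e: "0 < e" "e < 1"
    by (auto simp: e_def)
  have eq: "1 / (dt * g0 x) = L / (1 - e)"
    using x assms by (simp add: g0_def e_def x_def field_simps)
  show "L \<le> 1 / (dt * g0 (dt * L))"
    unfolding x_def[symmetric] eq using e assms by (simp add: field_simps)
  have "2 - x \<le> e * (2 + x)"
    unfolding e_def using exp_neg_pade_lower x by simp
  then have "(1 / dt + L / 2) * (1 - e) \<le> L"
    using assms by (simp add: x_def field_simps)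
  then show "1 / dt + L / 2 \<le> 1 / (dt * g0 (dt * L))"
    unfolding x_def[symmetric] eq using e by (simp add: field_simps)
qed

definition diff_weight1 :: "real \<Rightarrow> real" where
  "diff_weight1 x = (3/2 * g1 x + 1/2 * g2 x) / g0 x"

definition diff_weight2 :: "real \<Rightarrow> real" where
  "diff_weight2 x = (1/2 * g1 x + 1/2 * g2 x) / g0 x"

lemma diff_weight_bounds:
  assumes "0 \<le> x"
  shows "0 \<le> diff_weight1 x \<and> diff_weight1 x \<le> 2" "0 \<le> diff_weight2 x \<and> diff_weight2 x \<le> 1"
  using g_ordered[OF assms] g0_pos[OF assms]
  by (auto simp: diff_weight1_def diff_weight2_def divide_le_eq)

lemma le_inverse_plus_quadratic:
  fixes dt a B :: real
  assumes "dt > 0" "a \<ge> 0" "B \<ge> a ^ 3"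
  shows "a \<le> 1 / dt + B * dt\<^sup>2"
proof (cases "dt * a \<le> 1")
  case True
  then have "a \<le> 1 / dt"
    using assms(1) by (simp add: field_simps)
  moreover have "0 \<le> B * dt\<^sup>2"
    using assms(2,3) by (simp add: order_trans[OF zero_le_power])
  ultimately show ?thesis
    by linarith
next
  case False
  then have "1 \<le> (dt * a)\<^sup>2"
    by (simp add: one_le_power)
  then have "a \<le> a * (dt * a)\<^sup>2"
    using mult_left_mono[OF _ assms(2)] by fastforce
  also have "\<dots> = a ^ 3 * dt\<^sup>2"
    by (simp add: power2_eq_square power3_eq_cube)
  also have "\<dots> \<le> B * dt\<^sup>2"
    using assms(3) by (simp add: mult_right_mono)
  finally have "a \<le> B * dt\<^sup>2" .
  moreover have "0 < 1 / dt"
    using assms(1) by simp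
  ultimately show ?thesis
    by linarith
qed

lemma mode_coercivity:
  fixes eps kap dt A g lam :: real
  assumes "eps > 0" "kap \<ge> 0" "dt > 0" "lam > 0" "g \<ge> 0"
    and A: "A \<ge> 2 * (g + 1/2) ^ 4 / eps\<^sup>2"
  shows "g * lam \<le>
    1 / (dt * g0 (dt * (eps\<^sup>2 * lam\<^sup>2 + kap * lam))) + A * dt\<^sup>2 * lam\<^sup>2 - lam / 2 - eps\<^sup>2 * lam\<^sup>2 / 2"
proof -
  define L where "L = eps\<^sup>2 * lam\<^sup>2 + kap * lam"
  define X where "X = 1 / (dt * g0 (dt * L))"
  have "L > 0"
    using assms by (simp add: L_def add_pos_nonneg)
  note X_lower = inverse_dt_g0_lower[OF assms(3) this, folded X_def]
  have kap_lam: "kap * lam \<ge> 0"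
    using assms by simp
  have "0 \<le> 2 * (g + 1/2) ^ 4 / eps\<^sup>2"
    by simp
  then have "0 \<le> A"
    using A by linarith
  then have A_dt_lam: "0 \<le> A * dt\<^sup>2 * lam\<^sup>2"
    by simp
  show ?thesis
    unfolding L_def[symmetric] X_def[symmetric]
  proof (cases "2 * g + 1 \<le> eps\<^sup>2 * lam")
    case True
    then have "(2 * g + 1) * lam \<le> eps\<^sup>2 * lam\<^sup>2"
      using assms(4) mult_right_mono[OF True, of lam] by (simp add: power2_eq_square mult_ac)
    then show "g * lam \<le> X + A * dt\<^sup>2 * lam\<^sup>2 - lam / 2 - eps\<^sup>2 * lam\<^sup>2 / 2"
      using X_lower(1) kap_lam A_dt_lam unfolding L_def by (simp add: algebra_simps)
  next
    case False
    then have "lam \<le> 2 * (g + 1/2) / eps\<^sup>2"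
      using assms(1) by (simp add: field_simps)
    then have "(g + 1/2) ^ 3 * lam \<le> (g + 1/2) ^ 3 * (2 * (g + 1/2) / eps\<^sup>2)"
      using assms(5) by (intro mult_left_mono) auto
    also have "\<dots> = 2 * (g + 1/2) ^ 4 / eps\<^sup>2"
      by (simp add: power_numeral_reduce)
    also have "\<dots> \<le> A"
      by (fact A)
    finally have "(g + 1/2) ^ 3 * lam * lam\<^sup>2 \<le> A * lam\<^sup>2"
      by (simp add: mult_right_mono)
    then have "(g + 1/2) * lam \<le> 1 / dt + A * lam\<^sup>2 * dt\<^sup>2"
      using assms(3,4,5)
      by (intro le_inverse_plus_quadratic) (auto simp: power_mult_distrib power_numeral_reduce mult_ac)
    then show "g * lam \<le> X + A * dt\<^sup>2 * lam\<^sup>2 - lam / 2 - eps\<^sup>2 * lam\<^sup>2 / 2"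
      using X_lower(2) kap_lam unfolding L_def by (simp add: field_simps)
  qed
qed

lemma C4_ge_1: "1 \<le> 1 / (1 - exp (- 2 :: real))"
  by (simp add: le_divide_eq)

lemma ln_ratio_upper:
  fixes g c :: real
  assumes "0 < c" "c < g"
  shows "0 < ln ((g + c) / (g - c))" "ln ((g + c) / (g - c)) \<le> 2 * c / (g - c)"
proof -
  have "1 < (g + c) / (g - c)"
    using assms by (simp add: field_simps)
  then show "0 < ln ((g + c) / (g - c))"
    by simp
  have "ln ((g + c) / (g - c)) \<le> (g + c) / (g - c) - 1"
    using \<open>1 < (g + c) / (g - c)\<close> by (intro ln_le_minus_one) simp
  also have "\<dots> = 2 * c / (g - c)"
    using assms by (simp add: field_simps)
  finally show "ln ((g + c) / (g - c)) \<le> 2 * c / (g - c)" .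
qed

lemma A_threshold:
  fixes eps kap g A :: real
  assumes "eps > 0" "kap > 0" "3 + 3 * kap \<le> g"
    and A: "A \<ge> (g - kap / 4) ^ 4 / (ln ((g + kap / 2) / (g - kap / 2)))\<^sup>2 / eps\<^sup>2"
  shows "2 * (g + 1/2) ^ 4 / eps\<^sup>2 \<le> A"
proof -
  define alpha where "alpha = ln ((g + kap / 2) / (g - kap / 2))"
  have gk: "0 < g - kap / 2"
    using assms by simp
  have alpha: "0 < alpha" "alpha \<le> kap / (g - kap / 2)"
    using ln_ratio_upper[of "kap / 2" g] assms unfolding alpha_def by auto
  then have alpha_sq: "alpha\<^sup>2 \<le> kap\<^sup>2 / (g - kap / 2)\<^sup>2"
    using power_mono[OF alpha(2), of 2] by (simp add: power_divide)
  have "2 * kap\<^sup>2 * (g + 1/2) ^ 4 \<le> 2 * kap\<^sup>2 * (7 / 6 * g) ^ 4"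
    using assms by (intro mult_left_mono power_mono) auto
  also have "\<dots> \<le> (11 / 12 * g) ^ 4 * (5 / 2 * kap)\<^sup>2"
    using assms by (simp add: power_mult_distrib power2_eq_square power4_eq_xxxx)
  also have "\<dots> \<le> (g - kap / 4) ^ 4 * (g - kap / 2)\<^sup>2"
    using assms by (intro mult_mono power_mono) auto
  finally have "2 * (g + 1/2) ^ 4 \<le> (g - kap / 4) ^ 4 / (kap\<^sup>2 / (g - kap / 2)\<^sup>2)"
    using assms gk by (simp add: field_simps)
  also have "\<dots> \<le> (g - kap / 4) ^ 4 / alpha\<^sup>2"
    using alpha alpha_sq assms gk by (intro divide_left_mono) auto
  finally show ?thesis
    using A assms(1) unfolding alpha_def[symmetric]
    by (meson divide_right_mono order_trans zero_le_power2)
qed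

section \<open>Pointwise inequalities for the nonlinearity\<close>

lemma cauchy_schwarz_2d:
  fixes a b c d :: real
  shows "a * c + b * d \<le> sqrt (a\<^sup>2 + b\<^sup>2) * sqrt (c\<^sup>2 + d\<^sup>2)"
proof -
  have "(a * c + b * d)\<^sup>2 \<le> (a\<^sup>2 + b\<^sup>2) * (c\<^sup>2 + d\<^sup>2)"
    using zero_le_power2[of "a * d - b * c"] by (simp add: power2_eq_square algebra_simps)
  then have "\<bar>a * c + b * d\<bar> \<le> sqrt (a\<^sup>2 + b\<^sup>2) * sqrt (c\<^sup>2 + d\<^sup>2)"
    by (metis real_sqrt_abs real_sqrt_le_mono real_sqrt_mult)
  then show ?thesis
    by simp
qed

lemma radial_quadratic_bound:
  fixes s t :: real
  assumes "s \<ge> 0" "t \<ge> 0"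
  shows "(s\<^sup>2 - t\<^sup>2) / (2 * (1 + t\<^sup>2)) + (s * t - s\<^sup>2) / (1 + s\<^sup>2) \<le> (s - t)\<^sup>2 / 2"
proof -
  have pos: "1 + s\<^sup>2 > 0" "1 + t\<^sup>2 > 0"
    by (auto intro: add_pos_nonneg)
  have "0 \<le> (s * t - 1)\<^sup>2 + t\<^sup>2 + 1"
    by simp
  then have "s\<^sup>2 + 2 * s * t - 1 \<le> (1 + s\<^sup>2) * (1 + t\<^sup>2)"
    by (simp add: power2_eq_square algebra_simps)
  then have "(s - t)\<^sup>2 * (s\<^sup>2 + 2 * s * t - 1) \<le> (s - t)\<^sup>2 / 2 * (2 * ((1 + s\<^sup>2) * (1 + t\<^sup>2)))"
    by (simp add: mult_left_mono)
  moreover have "(s\<^sup>2 - t\<^sup>2) * (1 + s\<^sup>2) + 2 * (s * t - s\<^sup>2) * (1 + t\<^sup>2) =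
      (s - t)\<^sup>2 * (s\<^sup>2 + 2 * s * t - 1)"
    by (simp add: power2_eq_square algebra_simps)
  moreover have "(s\<^sup>2 - t\<^sup>2) / (2 * (1 + t\<^sup>2)) + (s * t - s\<^sup>2) / (1 + s\<^sup>2) =
      ((s\<^sup>2 - t\<^sup>2) * (1 + s\<^sup>2) + 2 * (s * t - s\<^sup>2) * (1 + t\<^sup>2)) / (2 * ((1 + s\<^sup>2) * (1 + t\<^sup>2)))"
    using pos by (simp add: field_simps)
  ultimately show ?thesis
    using pos by (simp add: pos_divide_le_eq)
qed

text \<open>The Hessian of \<open>-ln(1 + |p|\<^sup>2)/2\<close> is bounded above by the identity; by Cauchy-Schwarz
  the two-dimensional bound reduces to the radial one.\<close>

lemma neg_half_ln_quadratic_upper: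
  fixes a b c d :: real
  shows "- 1/2 * ln (1 + c\<^sup>2 + d\<^sup>2) \<le> - 1/2 * ln (1 + a\<^sup>2 + b\<^sup>2)
     - (a / (1 + a\<^sup>2 + b\<^sup>2)) * (c - a) - (b / (1 + a\<^sup>2 + b\<^sup>2)) * (d - b)
     + 1/2 * ((c - a)\<^sup>2 + (d - b)\<^sup>2)"
proof -
  define P Q pq where "P = a\<^sup>2 + b\<^sup>2" and "Q = c\<^sup>2 + d\<^sup>2" and "pq = a * c + b * d"
  define s t where "s = sqrt P" and "t = sqrt Q"
  define st D X Y where "st = s * t" and "D = (P - Q) / (2 * (1 + Q))"
    and "X = (pq - P) / (1 + P)" and "Y = (st - P) / (1 + P)"
  have PQ: "P \<ge> 0" "Q \<ge> 0"
    by (simp_all add: P_def Q_def)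
  have "ln (1 + P) - ln (1 + Q) = ln ((1 + P) / (1 + Q))"
    using PQ by (simp add: ln_div)
  also have "\<dots> \<le> (1 + P) / (1 + Q) - 1"
    using PQ by (intro ln_le_minus_one) simp
  also have "\<dots> = 2 * D"
    using PQ by (simp add: D_def field_simps)
  finally have ln_diff: "ln (1 + P) - ln (1 + Q) \<le> 2 * D" .
  have st: "s \<ge> 0" "t \<ge> 0" "s\<^sup>2 = P" "t\<^sup>2 = Q"
    using PQ by (simp_all add: s_def t_def)
  then have "D + Y \<le> (s - t)\<^sup>2 / 2"
    using radial_quadratic_bound[of s t] by (simp add: D_def Y_def st_def mult_ac)
  moreover have "(s - t)\<^sup>2 / 2 = P / 2 + Q / 2 - st"
    using st by (simp add: power2_diff st_def field_simps)
  moreover have "pq \<le> st"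
    unfolding pq_def st_def s_def t_def P_def Q_def by (rule cauchy_schwarz_2d)
  moreover have "X \<le> Y"
    unfolding X_def Y_def using \<open>pq \<le> st\<close> PQ by (intro divide_right_mono) auto
  ultimately have "- 1/2 * ln (1 + Q) \<le> - 1/2 * ln (1 + P) - X + (P / 2 + Q / 2 - pq)"
    using ln_diff by linarith
  moreover have "a / (1 + a\<^sup>2 + b\<^sup>2) * (c - a) + b / (1 + a\<^sup>2 + b\<^sup>2) * (d - b) = X"
    by (simp add: X_def P_def pq_def add_divide_distrib[symmetric] diff_divide_distrib algebra_simps
        power2_eq_square)
  moreover have "1/2 * ((c - a)\<^sup>2 + (d - b)\<^sup>2) = P / 2 + Q / 2 - pq"
    by (simp add: P_def Q_def pq_def power2_eq_square field_simps)
  moreover have "ln (1 + a\<^sup>2 + b\<^sup>2) = ln (1 + P)" "ln (1 + c\<^sup>2 + d\<^sup>2) = ln (1 + Q)"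
    by (simp_all add: P_def Q_def add.assoc)
  ultimately show ?thesis
    by linarith
qed

lemma nl_flux_lipschitz_radial:
  fixes s t :: real
  shows "(s / (1 + s\<^sup>2) - t / (1 + t\<^sup>2))\<^sup>2 \<le> (s - t)\<^sup>2"
proof -
  have pos: "1 + s\<^sup>2 > 0" "1 + t\<^sup>2 > 0"
    by (auto intro: add_pos_nonneg)
  have eq: "s / (1 + s\<^sup>2) - t / (1 + t\<^sup>2) = (s - t) * ((1 - s * t) / ((1 + s\<^sup>2) * (1 + t\<^sup>2)))"
    using pos by (simp add: field_simps) (simp add: power2_eq_square algebra_simps)
  have "2 * \<bar>s * t\<bar> \<le> s\<^sup>2 + t\<^sup>2"
    using zero_le_power2[of "\<bar>s\<bar> - \<bar>t\<bar>"] by (simp add: power2_diff abs_mult)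
  moreover have "\<bar>1 - s * t\<bar> \<le> 1 + \<bar>s * t\<bar>" "0 \<le> s\<^sup>2 * t\<^sup>2"
    by auto
  moreover have "(1 + s\<^sup>2) * (1 + t\<^sup>2) = 1 + s\<^sup>2 + t\<^sup>2 + s\<^sup>2 * t\<^sup>2"
    by (simp add: algebra_simps)
  ultimately have "\<bar>1 - s * t\<bar> \<le> (1 + s\<^sup>2) * (1 + t\<^sup>2)"
    by linarith
  then have "\<bar>(1 - s * t) / ((1 + s\<^sup>2) * (1 + t\<^sup>2))\<bar> \<le> 1"
    using pos by (simp add: abs_divide abs_mult)
  then have "\<bar>s / (1 + s\<^sup>2) - t / (1 + t\<^sup>2)\<bar> \<le> \<bar>s - t\<bar>"
    unfolding eq abs_mult by (rule mult_left_le) simp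
  then show ?thesis
    by (metis abs_ge_zero power2_abs power_mono)
qed

lemma nl_flux_lipschitz:
  fixes a b c d :: real
  shows "(a / (1 + a\<^sup>2 + b\<^sup>2) - c / (1 + c\<^sup>2 + d\<^sup>2))\<^sup>2 + (b / (1 + a\<^sup>2 + b\<^sup>2) - d / (1 + c\<^sup>2 + d\<^sup>2))\<^sup>2
    \<le> (a - c)\<^sup>2 + (b - d)\<^sup>2"
proof -
  define P Q pq where "P = a\<^sup>2 + b\<^sup>2" and "Q = c\<^sup>2 + d\<^sup>2" and "pq = a * c + b * d"
  define s t where "s = sqrt P" and "t = sqrt Q"
  define al be where "al = 1 / (1 + P)" and "be = 1 / (1 + Q)"
  have PQ: "P \<ge> 0" "Q \<ge> 0"
    by (simp_all add: P_def Q_def)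
  have st: "s\<^sup>2 = P" "t\<^sup>2 = Q"
    using PQ by (simp_all add: s_def t_def)
  have "0 < al" "al \<le> 1" "0 < be" "be \<le> 1"
    using PQ by (auto simp: al_def be_def)
  then have "0 < al * be" "al * be \<le> 1"
    by (auto simp: mult_le_one)
  moreover have "pq \<le> s * t"
    unfolding pq_def s_def t_def P_def Q_def by (rule cauchy_schwarz_2d)
  ultimately have "pq * (1 - al * be) \<le> s * t * (1 - al * be)"
    by (intro mult_right_mono) auto
  moreover have "(s * al - t * be)\<^sup>2 \<le> (s - t)\<^sup>2"
    using nl_flux_lipschitz_radial[of s t] st by (simp add: al_def be_def)
  moreover have "a / (1 + a\<^sup>2 + b\<^sup>2) = a * al" "b / (1 + a\<^sup>2 + b\<^sup>2) = b * al"
    "c / (1 + c\<^sup>2 + d\<^sup>2) = c * be" "d / (1 + c\<^sup>2 + d\<^sup>2) = d * be"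
    by (simp_all add: al_def be_def P_def Q_def add.assoc)
  moreover have "(a * al - c * be)\<^sup>2 + (b * al - d * be)\<^sup>2 = P * al\<^sup>2 + Q * be\<^sup>2 - 2 * pq * (al * be)"
    by (simp add: P_def Q_def pq_def power2_eq_square algebra_simps)
  ultimately show ?thesis
    using st by (simp add: P_def Q_def pq_def power2_eq_square algebra_simps)
qed

lemma flux_lipschitz:
  fixes a b c d kap :: real
  assumes "kap \<ge> 0"
  shows "((a / (1 + a\<^sup>2 + b\<^sup>2) + kap * a) - (c / (1 + c\<^sup>2 + d\<^sup>2) + kap * c))\<^sup>2
       + ((b / (1 + a\<^sup>2 + b\<^sup>2) + kap * b) - (d / (1 + c\<^sup>2 + d\<^sup>2) + kap * d))\<^sup>2
    \<le> (1 + kap)\<^sup>2 * ((a - c)\<^sup>2 + (b - d)\<^sup>2)"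
proof -
  define u1 u2 where "u1 = a / (1 + a\<^sup>2 + b\<^sup>2) - c / (1 + c\<^sup>2 + d\<^sup>2)"
    and "u2 = b / (1 + a\<^sup>2 + b\<^sup>2) - d / (1 + c\<^sup>2 + d\<^sup>2)"
  define r1 r2 where "r1 = a - c" and "r2 = b - d"
  have u: "u1\<^sup>2 + u2\<^sup>2 \<le> r1\<^sup>2 + r2\<^sup>2"
    unfolding u1_def u2_def r1_def r2_def by (rule nl_flux_lipschitz)
  have "2 * (u1 * r1 + u2 * r2) \<le> u1\<^sup>2 + u2\<^sup>2 + r1\<^sup>2 + r2\<^sup>2"
    using zero_le_power2[of "u1 - r1"] zero_le_power2[of "u2 - r2"]
    by (simp add: power2_eq_square algebra_simps)
  then have "2 * kap * (u1 * r1 + u2 * r2) \<le> 2 * kap * (r1\<^sup>2 + r2\<^sup>2)"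
    using u assms by (intro mult_left_mono) auto
  moreover have "((a / (1 + a\<^sup>2 + b\<^sup>2) + kap * a) - (c / (1 + c\<^sup>2 + d\<^sup>2) + kap * c))\<^sup>2
       + ((b / (1 + a\<^sup>2 + b\<^sup>2) + kap * b) - (d / (1 + c\<^sup>2 + d\<^sup>2) + kap * d))\<^sup>2
     = (u1 + kap * r1)\<^sup>2 + (u2 + kap * r2)\<^sup>2"
    unfolding u1_def u2_def r1_def r2_def by (simp add: algebra_simps)
  ultimately show ?thesis
    using u unfolding r1_def[symmetric] r2_def[symmetric] by (simp add: power2_eq_square algebra_simps)
qed

lemma young_2d:
  fixes a1 a2 b1 b2 g1 g2 kap th :: real
  assumes "kap \<ge> 0" "th > 0" "a1\<^sup>2 + a2\<^sup>2 \<le> (1 + kap)\<^sup>2 * (g1\<^sup>2 + g2\<^sup>2)"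
  shows "a1 * b1 + a2 * b2 \<le> (1 + kap) * (th / 2 * (g1\<^sup>2 + g2\<^sup>2) + (b1\<^sup>2 + b2\<^sup>2) / (2 * th))"
proof -
  define sg where "sg = th / (1 + kap)"
  have sg: "sg > 0"
    using assms by (simp add: sg_def)
  have "2 * sg * (a1 * b1 + a2 * b2) \<le> sg\<^sup>2 * (a1\<^sup>2 + a2\<^sup>2) + (b1\<^sup>2 + b2\<^sup>2)"
    using zero_le_power2[of "sg * a1 - b1"] zero_le_power2[of "sg * a2 - b2"]
    by (simp add: power2_eq_square algebra_simps)
  also have "\<dots> \<le> sg\<^sup>2 * ((1 + kap)\<^sup>2 * (g1\<^sup>2 + g2\<^sup>2)) + (b1\<^sup>2 + b2\<^sup>2)"
    using assms(3) by (simp add: mult_left_mono)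
  also have "\<dots> = th\<^sup>2 * (g1\<^sup>2 + g2\<^sup>2) + (b1\<^sup>2 + b2\<^sup>2)"
    using assms(1) by (simp add: sg_def power_divide)
  finally show ?thesis
    using sg assms by (simp add: sg_def field_simps power2_eq_square)
qed

section \<open>Energy estimates\<close>

lemma gradnorm2N_sq: "(gradnorm2N K f)\<^sup>2 = ipN K (DNx K f) (DNx K f) + ipN K (DNy K f) (DNy K f)"
  unfolding gradnorm2N_def using ipN_self_nonneg[of K "DNx K f"] ipN_self_nonneg[of K "DNy K f"]
  by simp

lemma gradnorm2N_sq_modes:
  "(gradnorm2N K f)\<^sup>2 = (\<Sum>k\<in>modes K. \<Sum>l\<in>modes K. lam k l * (cmod (fcoef K f k l))\<^sup>2)"
  unfolding gradnorm2N_sq ipN_self_parseval sum.distrib[symmetric]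
  by (intro sum.cong refl)
    (simp add: fcoef_DNx fcoef_DNy norm_mult power_mult_distrib lam_def algebra_simps)

lemma norm2N_LapN_sq_modes:
  "(norm2N K (LapN K f))\<^sup>2 = (\<Sum>k\<in>modes K. \<Sum>l\<in>modes K. (lam k l)\<^sup>2 * (cmod (fcoef K f k l))\<^sup>2)"
  unfolding norm2N_def using ipN_self_nonneg[of K "LapN K f"]
  by (simp add: ipN_self_parseval fcoef_LapN norm_mult power_mult_distrib cong: sum.cong)

lemma gradnorm2N_gsub_commute: "gradnorm2N K (gsub f g) = gradnorm2N K (gsub g f)"
  unfolding gradnorm2N_def ipN_def DNx_gsub DNy_gsub by (simp add: algebra_simps)

lemma ipN_grad_modes:
  "ipN K A1 (DNx K B) + ipN K A2 (DNy K B) = (\<Sum>k\<in>modes K. \<Sum>l\<in>modes K.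
     - Re ((dsym k * fcoef K A1 k l + dsym l * fcoef K A2 k l) * cnj (fcoef K B k l)))"
  unfolding ipN_parseval Re_sum sum.distrib[symmetric]
  by (intro sum.cong refl) (simp add: fcoef_DNx fcoef_DNy algebra_simps)

lemma sum_grid_mono:
  "(\<And>i j. f i j \<le> g i j) \<Longrightarrow>
    (hh K)\<^sup>2 * (\<Sum>i<NN K. \<Sum>j<NN K. f i j) \<le> (hh K)\<^sup>2 * (\<Sum>i<NN K. \<Sum>j<NN K. (g i j :: real))"
  by (intro mult_left_mono sum_mono) auto

lemma EN_log_part_upper:
  "(hh K)\<^sup>2 * (\<Sum>i<NN K. \<Sum>j<NN K. - 1/2 * ln (1 + (DNx K u1 i j)\<^sup>2 + (DNy K u1 i j)\<^sup>2))
   \<le> (hh K)\<^sup>2 * (\<Sum>i<NN K. \<Sum>j<NN K. - 1/2 * ln (1 + (DNx K u0 i j)\<^sup>2 + (DNy K u0 i j)\<^sup>2))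
     - (ipN K (nl_flux_x K u0) (DNx K (gsub u1 u0)) + ipN K (nl_flux_y K u0) (DNy K (gsub u1 u0)))
     + 1/2 * (gradnorm2N K (gsub u1 u0))\<^sup>2"
proof -
  define dx dy where "dx = DNx K (gsub u1 u0)" and "dy = DNy K (gsub u1 u0)"
  define L0 L1 where "L0 i j = - 1/2 * ln (1 + (DNx K u0 i j)\<^sup>2 + (DNy K u0 i j)\<^sup>2)"
    and "L1 i j = - 1/2 * ln (1 + (DNx K u1 i j)\<^sup>2 + (DNy K u1 i j)\<^sup>2)" for i j
  have "L1 i j \<le> L0 i j - (nl_flux_x K u0 i j * dx i j + nl_flux_y K u0 i j * dy i j)
      + 1/2 * (dx i j * dx i j + dy i j * dy i j)" for i j
    using neg_half_ln_quadratic_upper[where a = "DNx K u0 i j" and b = "DNy K u0 i j"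
        and c = "DNx K u1 i j" and d = "DNy K u1 i j"]
    unfolding L0_def L1_def dx_def dy_def DNx_gsub DNy_gsub nl_flux_x_def nl_flux_y_def
    by (simp add: power2_eq_square algebra_simps)
  then have "(hh K)\<^sup>2 * (\<Sum>i<NN K. \<Sum>j<NN K. L1 i j) \<le> (hh K)\<^sup>2 * (\<Sum>i<NN K. \<Sum>j<NN K.
      L0 i j - (nl_flux_x K u0 i j * dx i j + nl_flux_y K u0 i j * dy i j)
      + 1/2 * (dx i j * dx i j + dy i j * dy i j))"
    by (rule sum_grid_mono)
  also have "\<dots> = (hh K)\<^sup>2 * (\<Sum>i<NN K. \<Sum>j<NN K. L0 i j)
     - (ipN K (nl_flux_x K u0) dx + ipN K (nl_flux_y K u0) dy)
     + 1/2 * (ipN K dx dx + ipN K dy dy)"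
    unfolding ipN_def
    by (simp only: sum.distrib sum_subtractf sum_distrib_left distrib_left right_diff_distrib)
      (simp add: algebra_simps)
  finally show ?thesis
    unfolding L0_def L1_def dx_def dy_def gradnorm2N_sq .
qed

lemma ipN_young:
  assumes "kap \<ge> 0" "th > 0"
    and "\<And>i j. (A1 i j)\<^sup>2 + (A2 i j)\<^sup>2 \<le> (1 + kap)\<^sup>2 * ((G1 i j)\<^sup>2 + (G2 i j)\<^sup>2)"
  shows "ipN K A1 B1 + ipN K A2 B2 \<le>
    (1 + kap) * (th / 2 * (ipN K G1 G1 + ipN K G2 G2) + (ipN K B1 B1 + ipN K B2 B2) / (2 * th))"
proof -
  have "ipN K A1 B1 + ipN K A2 B2 = (hh K)\<^sup>2 * (\<Sum>i<NN K. \<Sum>j<NN K. A1 i j * B1 i j + A2 i j * B2 i j)"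
    unfolding ipN_def by (simp add: sum.distrib algebra_simps)
  also have "\<dots> \<le> (hh K)\<^sup>2 * (\<Sum>i<NN K. \<Sum>j<NN K.
      (1 + kap) * (th / 2 * ((G1 i j)\<^sup>2 + (G2 i j)\<^sup>2) + ((B1 i j)\<^sup>2 + (B2 i j)\<^sup>2) / (2 * th)))"
    by (intro sum_grid_mono young_2d[OF assms])
  also have "\<dots> = (1 + kap) * (th / 2 * (ipN K G1 G1 + ipN K G2 G2) + (ipN K B1 B1 + ipN K B2 B2) / (2 * th))"
  proof -
    define c1 c2 where "c1 = (1 + kap) * th / 2" and "c2 = (1 + kap) / (2 * th)"
    have "(1 + kap) * (th / 2 * ((G1 i j)\<^sup>2 + (G2 i j)\<^sup>2) + ((B1 i j)\<^sup>2 + (B2 i j)\<^sup>2) / (2 * th))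
       = c1 * (G1 i j * G1 i j) + c1 * (G2 i j * G2 i j) + c2 * (B1 i j * B1 i j) + c2 * (B2 i j * B2 i j)"
      for i j
      using assms(2) unfolding c1_def c2_def by (simp add: field_simps power2_eq_square)
    then have sum_eq: "(\<Sum>i<NN K. \<Sum>j<NN K. (1 + kap) * (th / 2 * ((G1 i j)\<^sup>2 + (G2 i j)\<^sup>2)
        + ((B1 i j)\<^sup>2 + (B2 i j)\<^sup>2) / (2 * th)))
      = c1 * (\<Sum>i<NN K. \<Sum>j<NN K. G1 i j * G1 i j) + c1 * (\<Sum>i<NN K. \<Sum>j<NN K. G2 i j * G2 i j)
        + c2 * (\<Sum>i<NN K. \<Sum>j<NN K. B1 i j * B1 i j) + c2 * (\<Sum>i<NN K. \<Sum>j<NN K. B2 i j * B2 i j)"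
      by (simp only: sum.distrib sum_distrib_left)
    show ?thesis
      unfolding sum_eq ipN_def c1_def c2_def using assms(2) by (simp add: field_simps)
  qed
  finally show ?thesis .
qed

lemma gradnorm2N_fmult_le:
  assumes "\<And>x. 0 \<le> x \<Longrightarrow> 0 \<le> P x \<and> P x \<le> c" "dt > 0" "kap \<ge> 0"
  shows "(gradnorm2N K (fmult K (\<lambda>k l. complex_of_real (P (dt * LamL eps kap k l))) d))\<^sup>2
    \<le> c\<^sup>2 * (gradnorm2N K d)\<^sup>2"
proof -
  have "(P (dt * LamL eps kap k l))\<^sup>2 \<le> c\<^sup>2" for k l
  proof -
    have "0 \<le> dt * LamL eps kap k l"
      using assms(2,3) lam_nonneg[of k l] by (simp add: LamL_def)
    then show ?thesis
      using assms(1) by (intro power_mono) auto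
  qed
  then have "lam k l * ((P (dt * LamL eps kap k l))\<^sup>2 * (cmod (fcoef K d k l))\<^sup>2)
      \<le> lam k l * (c\<^sup>2 * (cmod (fcoef K d k l))\<^sup>2)" for k l
    using lam_nonneg[of k l] by (intro mult_left_mono mult_right_mono) auto
  then show ?thesis
    unfolding gradnorm2N_sq_modes
    by (simp add: sum_mono fcoef_fmult hermitian_phi norm_mult power_mult_distrib sum_distrib_left
        mult.left_commute cong: sum.cong)
qed

lemma scheme_mode_identity:
  fixes C0 C1 Nh F0 F1 F2 :: complex and lam dt A eps kap x G0 G1 G2 :: real
  assumes step: "C1 = of_real (exp (- x)) * C0 - of_real (A * dt ^ 3 * G0 * lam\<^sup>2) * (C1 - C0)
     - of_real (dt * G0) * F0
     - of_real (dt * G1) * (3/2 * F0 - 2 * F1 + 1/2 * F2)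
     - of_real (dt * G2) * (1/2 * F0 - F1 + 1/2 * F2)"
    and F0: "F0 = Nh - of_real (kap * lam) * C0"
    and G0: "x * G0 = 1 - exp (- x)" "G0 > 0"
    and x: "x = dt * (eps\<^sup>2 * lam\<^sup>2 + kap * lam)" and "dt > 0"
  shows "Nh = - of_real (1 / (dt * G0) + A * dt\<^sup>2 * lam\<^sup>2) * (C1 - C0) - of_real (eps\<^sup>2 * lam\<^sup>2) * C0
     - of_real ((3/2 * G1 + 1/2 * G2) / G0) * (F0 - F1) + of_real ((1/2 * G1 + 1/2 * G2) / G0) * (F1 - F2)"
proof -
  have "of_real (1 / (dt * G0)) * of_real dt * of_real G0 = (1::complex)"
    using G0 \<open>dt > 0\<close> by (simp flip: of_real_mult)
  moreover have "of_real ((3/2 * G1 + 1/2 * G2) / G0) * of_real G0 = 3/2 * of_real G1 + 1/2 * (of_real G2 :: complex)"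
    "of_real ((1/2 * G1 + 1/2 * G2) / G0) * of_real G0 = 1/2 * of_real G1 + 1/2 * (of_real G2 :: complex)"
    using arg_cong[of "(3/2 * G1 + 1/2 * G2) / G0 * G0" "3/2 * G1 + 1/2 * G2" complex_of_real]
      arg_cong[of "(1/2 * G1 + 1/2 * G2) / G0 * G0" "1/2 * G1 + 1/2 * G2" complex_of_real] G0
    by simp_all
  moreover have "of_real (exp (- x)) =
      1 - of_real dt * (of_real eps ^ 2 * of_real lam ^ 2 + of_real kap * of_real lam) * (of_real G0 :: complex)"
  proof -
    have "exp (- x) = 1 - dt * (eps\<^sup>2 * lam\<^sup>2 + kap * lam) * G0"
      using G0 x by simp
    then show ?thesis
      by simp
  qed
  ultimately show ?thesis
    using step[unfolded of_real_mult of_real_power] F0[unfolded of_real_mult]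
    unfolding of_real_add of_real_mult of_real_power by algebra
qed

lemma mode_energy_estimate:
  fixes Nh C0 C1 D1 D2 :: complex and R E p1 p2 lam g :: real
  assumes Nh: "Nh = - of_real R * (C1 - C0) - of_real E * C0 - of_real p1 * D1 + of_real p2 * D2"
    and coercive: "g * lam \<le> R - lam / 2 - E / 2"
  shows "Re (Nh * cnj (C1 - C0)) + lam / 2 * (cmod (C1 - C0))\<^sup>2 + E / 2 * ((cmod C1)\<^sup>2 - (cmod C0)\<^sup>2)
    \<le> - (g * lam) * (cmod (C1 - C0))\<^sup>2 - Re (of_real p1 * D1 * cnj (C1 - C0))
      + Re (of_real p2 * D2 * cnj (C1 - C0))"
proof -
  define d where "d = C1 - C0"
  have "Re (Nh * cnj d) = - R * (cmod d)\<^sup>2 - E * Re (C0 * cnj d)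
      - Re (of_real p1 * D1 * cnj d) + Re (of_real p2 * D2 * cnj d)"
  proof -
    have "Nh * cnj d = - of_real R * (d * cnj d) - of_real E * (C0 * cnj d)
        - of_real p1 * D1 * cnj d + of_real p2 * D2 * cnj d"
      unfolding Nh d_def[symmetric] by (simp add: algebra_simps)
    then show ?thesis
      by (simp add: complex_mult_cnj cmod_power2)
  qed
  moreover have "(cmod C1)\<^sup>2 - (cmod C0)\<^sup>2 = (cmod d)\<^sup>2 + 2 * Re (C0 * cnj d)"
    unfolding d_def cmod_power2 by (simp add: power2_eq_square algebra_simps)
  moreover have "g * lam * (cmod d)\<^sup>2 \<le> (R - lam / 2 - E / 2) * (cmod d)\<^sup>2"
    using coercive by (simp add: mult_right_mono)
  ultimately show ?thesis
    unfolding d_def[symmetric] by (simp add: algebra_simps)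
qed

lemma fcoef_scheme_zero_mode:
  assumes "scheme_step K eps kap dt A u1 u0 um1 um2"
  shows "fcoef K u1 0 0 = fcoef K u0 0 0"
proof -
  have zero: "(0::int) \<in> modes K"
    by (simp add: modes_def)
  then have "fcoef K (fN K kap v) 0 0 = 0" for v
    using fcoef_fN_flux[OF zero zero] by simp
  then show ?thesis
    using fcoef_scheme_step[OF assms zero zero] by (simp add: LamL_def lam_def)
qed

lemma scheme_mode_estimate:
  assumes step: "scheme_step K eps kap dt A u1 u0 um1 um2" and kl: "k \<in> modes K" "l \<in> modes K"
    and pos: "eps > 0" "kap \<ge> 0" "dt > 0" "g \<ge> 0" and A: "A \<ge> 2 * (g + 1/2) ^ 4 / eps\<^sup>2"
  defines "C0 \<equiv> fcoef K u0 k l" and "C1 \<equiv> fcoef K u1 k l"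
    and "Nh \<equiv> dsym k * fcoef K (nl_flux_x K u0) k l + dsym l * fcoef K (nl_flux_y K u0) k l"
    and "D1 \<equiv> fcoef K (fN K kap u0) k l - fcoef K (fN K kap um1) k l"
    and "D2 \<equiv> fcoef K (fN K kap um1) k l - fcoef K (fN K kap um2) k l"
    and "x \<equiv> dt * LamL eps kap k l"
  shows "Re (Nh * cnj (C1 - C0)) + lam k l / 2 * (cmod (C1 - C0))\<^sup>2
      + eps\<^sup>2 * (lam k l)\<^sup>2 / 2 * ((cmod C1)\<^sup>2 - (cmod C0)\<^sup>2)
    \<le> - (g * lam k l) * (cmod (C1 - C0))\<^sup>2 - Re (of_real (diff_weight1 x) * D1 * cnj (C1 - C0))
      + Re (of_real (diff_weight2 x) * D2 * cnj (C1 - C0))"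
proof (cases "lam k l = 0")
  case True
  then have "k = 0" "l = 0"
    by (auto simp: lam_eq_0_iff)
  then have "C1 = C0" "Nh = 0"
    using fcoef_scheme_zero_mode[OF step] by (simp_all add: C0_def C1_def Nh_def)
  then show ?thesis
    using True by simp
next
  case False
  then have lam: "lam k l > 0"
    using lam_nonneg[of k l] by simp
  then have "x > 0"
    using pos by (simp add: x_def LamL_def add_pos_nonneg)
  have "Nh = - of_real (1 / (dt * g0 x) + A * dt\<^sup>2 * (lam k l)\<^sup>2) * (C1 - C0)
      - of_real (eps\<^sup>2 * (lam k l)\<^sup>2) * C0
      - of_real ((3/2 * g1 x + 1/2 * g2 x) / g0 x) * D1 + of_real ((1/2 * g1 x + 1/2 * g2 x) / g0 x) * D2"
    unfolding D1_def D2_def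
  proof (rule scheme_mode_identity)
    show "C1 = of_real (exp (- x)) * C0 - of_real (A * dt ^ 3 * g0 x * (lam k l)\<^sup>2) * (C1 - C0)
     - of_real (dt * g0 x) * fcoef K (fN K kap u0) k l
     - of_real (dt * g1 x) * (3/2 * fcoef K (fN K kap u0) k l - 2 * fcoef K (fN K kap um1) k l
         + 1/2 * fcoef K (fN K kap um2) k l)
     - of_real (dt * g2 x) * (1/2 * fcoef K (fN K kap u0) k l - fcoef K (fN K kap um1) k l
         + 1/2 * fcoef K (fN K kap um2) k l)"
      using fcoef_scheme_step[OF step kl] unfolding C1_def C0_def x_def .
    show "fcoef K (fN K kap u0) k l = Nh - of_real (kap * lam k l) * C0"
      unfolding Nh_def C0_def using fcoef_fN_nl_flux[OF kl] by simp
    show "x * g0 x = 1 - exp (- x)" "g0 x > 0"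
      using \<open>x > 0\<close> by (simp_all add: mult_g0 g0_pos)
  qed (simp_all add: x_def LamL_def pos)
  moreover have "g * lam k l \<le>
      1 / (dt * g0 x) + A * dt\<^sup>2 * (lam k l)\<^sup>2 - lam k l / 2 - eps\<^sup>2 * (lam k l)\<^sup>2 / 2"
    using mode_coercivity[OF pos(1,2,3) lam pos(4) A] by (simp add: x_def LamL_def)
  ultimately show ?thesis
    unfolding diff_weight1_def diff_weight2_def by (rule mode_energy_estimate)
qed

lemma EN_increment_modes:
  "EN K eps u1 - EN K eps u0 \<le> (\<Sum>k\<in>modes K. \<Sum>l\<in>modes K.
     Re ((dsym k * fcoef K (nl_flux_x K u0) k l + dsym l * fcoef K (nl_flux_y K u0) k l)
         * cnj (fcoef K u1 k l - fcoef K u0 k l))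
     + lam k l / 2 * (cmod (fcoef K u1 k l - fcoef K u0 k l))\<^sup>2
     + eps\<^sup>2 * (lam k l)\<^sup>2 / 2 * ((cmod (fcoef K u1 k l))\<^sup>2 - (cmod (fcoef K u0 k l))\<^sup>2))"
proof -
  have "EN K eps u1 - EN K eps u0 \<le>
      - (ipN K (nl_flux_x K u0) (DNx K (gsub u1 u0)) + ipN K (nl_flux_y K u0) (DNy K (gsub u1 u0)))
      + 1/2 * (gradnorm2N K (gsub u1 u0))\<^sup>2
      + eps\<^sup>2 / 2 * ((norm2N K (LapN K u1))\<^sup>2 - (norm2N K (LapN K u0))\<^sup>2)"
    using EN_log_part_upper[of K u1 u0] unfolding EN_def by (simp add: algebra_simps)
  also have "\<dots> = (\<Sum>k\<in>modes K. \<Sum>l\<in>modes K.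
     Re ((dsym k * fcoef K (nl_flux_x K u0) k l + dsym l * fcoef K (nl_flux_y K u0) k l)
         * cnj (fcoef K u1 k l - fcoef K u0 k l))
     + lam k l / 2 * (cmod (fcoef K u1 k l - fcoef K u0 k l))\<^sup>2
     + eps\<^sup>2 * (lam k l)\<^sup>2 / 2 * ((cmod (fcoef K u1 k l))\<^sup>2 - (cmod (fcoef K u0 k l))\<^sup>2))"
    unfolding ipN_grad_modes gradnorm2N_sq_modes norm2N_LapN_sq_modes fcoef_gsub
    by (simp add: sum.distrib sum_subtractf sum_distrib_left sum_negf algebra_simps)
  finally show ?thesis .
qed

lemma extrapolation_term_le:
  assumes "kap \<ge> 0" "dt > 0" "th > 0" and P: "\<And>x. 0 \<le> x \<Longrightarrow> 0 \<le> P x \<and> P x \<le> c"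
  shows "(\<Sum>k\<in>modes K. \<Sum>l\<in>modes K. - Re (of_real (P (dt * LamL eps kap k l))
      * (fcoef K (fN K kap v) k l - fcoef K (fN K kap w) k l) * cnj (fcoef K d k l)))
    \<le> (1 + kap) * (th / 2 * (gradnorm2N K (gsub v w))\<^sup>2 + c\<^sup>2 * (gradnorm2N K d)\<^sup>2 / (2 * th))"
proof -
  define W where "W = fmult K (\<lambda>k l. complex_of_real (P (dt * LamL eps kap k l))) d"
  define Hx Hy where "Hx = (\<lambda>i j. flux_x K kap v i j - flux_x K kap w i j)"
    and "Hy = (\<lambda>i j. flux_y K kap v i j - flux_y K kap w i j)"
  have "(\<Sum>k\<in>modes K. \<Sum>l\<in>modes K. - Re (of_real (P (dt * LamL eps kap k l))
      * (fcoef K (fN K kap v) k l - fcoef K (fN K kap w) k l) * cnj (fcoef K d k l)))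
    = ipN K Hx (DNx K W) + ipN K Hy (DNy K W)"
    unfolding ipN_grad_modes W_def Hx_def Hy_def
    by (intro sum.cong refl)
      (simp add: fcoef_fmult hermitian_phi fcoef_diff fcoef_fN_flux algebra_simps)
  also have "\<dots> \<le> (1 + kap) * (th / 2 * (ipN K (DNx K (gsub v w)) (DNx K (gsub v w))
      + ipN K (DNy K (gsub v w)) (DNy K (gsub v w)))
      + (ipN K (DNx K W) (DNx K W) + ipN K (DNy K W) (DNy K W)) / (2 * th))"
    using flux_lipschitz[OF assms(1)]
    by (intro ipN_young assms(1,3))
      (simp add: Hx_def Hy_def flux_x_def flux_y_def nl_flux_x_def nl_flux_y_def DNx_gsub DNy_gsub)
  also have "\<dots> \<le> (1 + kap) * (th / 2 * (gradnorm2N K (gsub v w))\<^sup>2 + c\<^sup>2 * (gradnorm2N K d)\<^sup>2 / (2 * th))"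
    using gradnorm2N_fmult_le[OF P assms(2,1), where K = K and eps = eps and d = d] assms
    unfolding gradnorm2N_sq[symmetric] W_def
    by (intro mult_left_mono add_left_mono divide_right_mono) auto
  finally show ?thesis .
qed

lemma EN_increment_le:
  assumes step: "scheme_step K eps kap dt A u1 u0 um1 um2"
    and pos: "eps > 0" "kap \<ge> 0" "dt > 0" "g \<ge> 0" and A: "A \<ge> 2 * (g + 1/2) ^ 4 / eps\<^sup>2"
  defines "X \<equiv> (gradnorm2N K (gsub u1 u0))\<^sup>2" and "Y \<equiv> (gradnorm2N K (gsub u0 um1))\<^sup>2"
    and "Z \<equiv> (gradnorm2N K (gsub um1 um2))\<^sup>2"
  shows "EN K eps u1 - EN K eps u0 \<le> - g * X + (1 + kap) * (Y + X) + (1 + kap) * (Z / 2 + X / 2)"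
proof -
  define d where "d k l = fcoef K u1 k l - fcoef K u0 k l" for k l
  define w1 w2 where "w1 k l = diff_weight1 (dt * LamL eps kap k l)"
    and "w2 k l = diff_weight2 (dt * LamL eps kap k l)" for k l
  define F where "F v k l = fcoef K (fN K kap v) k l" for v k l
  have X_modes: "(\<Sum>k\<in>modes K. \<Sum>l\<in>modes K. - g * (lam k l * (cmod (d k l))\<^sup>2)) = - g * X"
    unfolding X_def gradnorm2N_sq_modes fcoef_gsub d_def by (simp add: sum_distrib_left)
  have "EN K eps u1 - EN K eps u0 \<le> (\<Sum>k\<in>modes K. \<Sum>l\<in>modes K.
      - (g * lam k l) * (cmod (d k l))\<^sup>2 - Re (of_real (w1 k l) * (F u0 k l - F um1 k l) * cnj (d k l))
      + Re (of_real (w2 k l) * (F um1 k l - F um2 k l) * cnj (d k l)))"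
    using EN_increment_modes[of K eps u1 u0] scheme_mode_estimate[OF step _ _ pos A]
    unfolding d_def w1_def w2_def F_def
    by (meson order_trans sum_mono)
  also have "\<dots> = - g * X
      + (\<Sum>k\<in>modes K. \<Sum>l\<in>modes K. - Re (of_real (w1 k l) * (F u0 k l - F um1 k l) * cnj (d k l)))
      + (\<Sum>k\<in>modes K. \<Sum>l\<in>modes K. - Re (of_real (w2 k l) * (F um2 k l - F um1 k l) * cnj (d k l)))"
    unfolding X_modes[symmetric]
    by (simp only: sum.distrib[symmetric]) (intro sum.cong refl; simp add: algebra_simps)
  also have "\<dots> \<le> - g * X + (1 + kap) * (Y + X) + (1 + kap) * (Z / 2 + X / 2)"
  proof -
    have "(\<Sum>k\<in>modes K. \<Sum>l\<in>modes K. - Re (of_real (w1 k l) * (F u0 k l - F um1 k l) * cnj (d k l)))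
        \<le> (1 + kap) * (Y + X)"
      unfolding w1_def F_def d_def X_def Y_def
      using extrapolation_term_le[OF pos(2,3) _ diff_weight_bounds(1), where th = 2 and d = "gsub u1 u0",
          unfolded fcoef_gsub]
      by simp
    moreover have "(\<Sum>k\<in>modes K. \<Sum>l\<in>modes K. - Re (of_real (w2 k l) * (F um2 k l - F um1 k l) * cnj (d k l)))
        \<le> (1 + kap) * (Z / 2 + X / 2)"
      unfolding w2_def F_def d_def X_def Z_def gradnorm2N_gsub_commute[of K um1]
      using extrapolation_term_le[OF pos(2,3) _ diff_weight_bounds(2), where th = 1 and d = "gsub u1 u0",
          unfolded fcoef_gsub]
      by simp
    ultimately show ?thesis
      by linarith
  qed
  finally show ?thesis .
qed

lemma energy_step:
  assumes step: "scheme_step K eps kap dt A u1 u0 um1 um2"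
    and pos: "eps > 0" "kap \<ge> 0" "dt > 0" and C4: "C4 \<ge> 1"
    and gam: "gam0 = 3 * C4 * (1 + kap)" "gam1 = 3/2 * C4 * (1 + kap)" "gam3 = 1/2 * C4 * (1 + kap)"
    and A: "A \<ge> 2 * (gam0 + 1/2) ^ 4 / eps\<^sup>2"
  shows "Etil K eps gam1 gam3 u1 u0 um1 \<le> Etil K eps gam1 gam3 u0 um1 um2"
proof -
  define X Y Z where "X = (gradnorm2N K (gsub u1 u0))\<^sup>2" and "Y = (gradnorm2N K (gsub u0 um1))\<^sup>2"
    and "Z = (gradnorm2N K (gsub um1 um2))\<^sup>2"
  have "gam0 \<ge> 0"
    using gam(1) pos(2) C4 by simp
  have "EN K eps u1 - EN K eps u0 \<le> - gam0 * X + (1 + kap) * (Y + X) + (1 + kap) * (Z / 2 + X / 2)"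
    unfolding X_def Y_def Z_def by (rule EN_increment_le[OF step pos \<open>gam0 \<ge> 0\<close> A])
  moreover have "(1 + kap) * W \<le> C4 * (1 + kap) * W" if "W \<ge> 0" for W
    using mult_right_mono[OF C4, of "(1 + kap) * W"] pos(2) that by (simp add: mult.assoc)
  then have "(1 + kap) * X \<le> C4 * (1 + kap) * X" "(1 + kap) * Y \<le> C4 * (1 + kap) * Y"
    "(1 + kap) * Z \<le> C4 * (1 + kap) * Z"
    by (simp_all add: X_def Y_def Z_def)
  moreover have "(1 + kap) * (Y + X) = (1 + kap) * Y + (1 + kap) * X"
    "(1 + kap) * (Z / 2 + X / 2) = 1/2 * ((1 + kap) * Z) + 1/2 * ((1 + kap) * X)"
    "gam0 * X = 3 * (C4 * (1 + kap) * X)"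
    "gam1 * X = 3/2 * (C4 * (1 + kap) * X)" "gam1 * Y = 3/2 * (C4 * (1 + kap) * Y)"
    "gam3 * Y = 1/2 * (C4 * (1 + kap) * Y)" "gam3 * Z = 1/2 * (C4 * (1 + kap) * Z)"
    unfolding gam by (simp_all add: algebra_simps)
  ultimately show ?thesis
    unfolding Etil_def X_def[symmetric] Y_def[symmetric] Z_def[symmetric] by linarith
qed

theorem theorem2p1:
  fixes K :: nat and eps kap dt A C4 gam0 gam1 gam3 alpha0 :: real
    and u :: "int \<Rightarrow> grid"
  assumes "eps > 0" and "kap \<ge> 1/4" and "dt > 0"
    and "C4 = 1 / (1 - exp (- 2))"
    and "gam0 = 3 * C4 * (1 + kap)"
    and "gam1 = 3/2 * C4 * (1 + kap)"
    and "gam3 = 1/2 * C4 * (1 + kap)"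
    and "alpha0 = ln ((gam0 + kap / 2) / (gam0 - kap / 2))"
    and "A \<ge> (gam0 - kap / 4) ^ 4 / alpha0\<^sup>2 / eps\<^sup>2"
    and "gmean K (u (-2)) = gmean K (u 0)" and "gmean K (u (-1)) = gmean K (u 0)"
    and "\<forall>n\<ge>0. scheme_step K eps kap dt A (u (n + 1)) (u n) (u (n - 1)) (u (n - 2))"
  shows "\<forall>n\<ge>0. Etil K eps gam1 gam3 (u (n + 1)) (u n) (u (n - 1))
                \<le> Etil K eps gam1 gam3 (u n) (u (n - 1)) (u (n - 2))"
proof (intro allI impI)
  fix n :: int
  assume "n \<ge> 0"
  have C4: "C4 \<ge> 1"
    using C4_ge_1 assms(4) by simp
  then have "3 + 3 * kap \<le> gam0"
    using assms(2,5) mult_right_mono[OF C4, of "3 + 3 * kap"] by (simp add: algebra_simps)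
  then have A: "2 * (gam0 + 1/2) ^ 4 / eps\<^sup>2 \<le> A"
    using A_threshold[of eps kap gam0 A] assms(1,2,8,9) by simp
  show "Etil K eps gam1 gam3 (u (n + 1)) (u n) (u (n - 1))
      \<le> Etil K eps gam1 gam3 (u n) (u (n - 1)) (u (n - 2))"
    by (rule energy_step[OF _ assms(1) _ assms(3) C4 assms(5-7) A]) (use assms(2,12) \<open>n \<ge> 0\<close> in auto)
qed

end
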